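(* Let $k\ge3$. At any $\tau\ge1$, for any pairwise distinct $i,j,r\in[d]$, $$\frac{\mathbb{P}[i,j,r\in B_\tau]}{\mathbb{P}[i,j\in B_\tau]\cdot\mathbb{P}[i,r\in B_\tau]}\le\frac{d-1}{k-1}.$$
   Context: Integers $3\le k\le d-3$, $[d]=\{1,\dots,d\}$. SAMPLING$(k,d,\mathbf{w})$ for nonzero $\mathbf{w}\in\mathbb{R}^d$: with $q_i=|w_i|/\|\mathbf{w}\|_1$, draw $I_1\in[d]$ with $\mathbb{P}(I_1=i)=q_i$, then $k-1$ distinct indices uniformly without replacement from $[d]\setminus\{I_1\}$; output the $k$-set $B$. At round $\tau$, $B_\tau=$SAMPLING$(k,d,\hat{\mathbf{w}}_{\tau-1})$ for a nonzero vector $\hat{\mathbf{w}}_{\tau-1}\in\mathbb{R}^d$ determined by $B_1,\dots,B_{\tau-1}$ (with $\hat{\mathbf{w}}_0=\frac1d\mathbf{1}_d$); probabilities are over $B_\tau$ conditional on $B_1,\dots,B_{\tau-1}$. *)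

theory Defs
  imports "HOL-Probability.Probability"
begin

definition first_index_pmf :: "nat \<Rightarrow> (nat \<Rightarrow> real) \<Rightarrow> nat pmf" where
  "first_index_pmf d w =
     embed_pmf (\<lambda>i. if i \<in> {1..d} then \<bar>w i\<bar> / (\<Sum>j\<in>{1..d}. \<bar>w j\<bar>) else 0)"

text \<open>SAMPLING(k,d,w): draw I_1, then k-1 distinct indices uniformly without
  replacement from [d] minus I_1 (equivalently a uniform (k-1)-subset); output the k-set.\<close>
definition sampling_pmf :: "nat \<Rightarrow> nat \<Rightarrow> (nat \<Rightarrow> real) \<Rightarrow> nat set pmf" where
  "sampling_pmf k d w =
     bind_pmf (first_index_pmf d w)
       (\<lambda>i. map_pmf (insert i)
              (pmf_of_set {A. A \<subseteq> {1..d} - {i} \<and> card A = k - 1}))"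

end

theory Submission
  imports Defs
begin

text \<open>Given the first index \<open>x\<close>, a set \<open>S\<close> lies in \<open>B\<close> iff the other \<open>k - 1\<close> indices cover
  \<open>S - {x}\<close>, which happens with probability \<open>h |S - {x}|\<close>, where
  \<open>h t = (k - 1 choose t) / (d - 1 choose t)\<close>. Hence \<open>P[S \<subseteq> B]\<close> is the mixture
  \<open>h (|S| - 1) Q S + h |S| (1 - Q S)\<close>, \<open>Q\<close> being the law of the first index. The ratio of the
  three mixtures is bounded by \<open>1 / h 1 = (d - 1) / (k - 1)\<close> because \<open>h\<close> is decreasing and
  log-concave and \<open>Q {i, j, r} \<le> Q {i, j} + Q {i, r}\<close>.\<close>

lemma card_subsets_containing:
  assumes U: "finite U" and SU: "S \<subseteq> U"
  shows "card {A. A \<subseteq> U \<and> card A = m \<and> S \<subseteq> A} =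
         (if card S \<le> m then (card U - card S) choose (m - card S) else 0)"
proof (cases "card S \<le> m")
  case True
  have fS: "finite S" using U SU finite_subset by blast
  have eq: "{A. A \<subseteq> U \<and> card A = m \<and> S \<subseteq> A} =
        (\<lambda>B. B \<union> S) ` {B. B \<subseteq> U - S \<and> card B = m - card S}"
  proof (rule set_eqI, rule iffI)
    fix A assume A: "A \<in> {A. A \<subseteq> U \<and> card A = m \<and> S \<subseteq> A}"
    hence "A = (A - S) \<union> S" by auto
    moreover have "card (A - S) = m - card S"
      using A fS by (simp add: card_Diff_subset)
    ultimately show "A \<in> (\<lambda>B. B \<union> S) ` {B. B \<subseteq> U - S \<and> card B = m - card S}"
      using A by blast
  next
    fix A assume "A \<in> (\<lambda>B. B \<union> S) ` {B. B \<subseteq> U - S \<and> card B = m - card S}"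
    then obtain B where B: "B \<subseteq> U - S" "card B = m - card S" "A = B \<union> S" by blast
    have "finite B" using B(1) U finite_subset by blast
    moreover have "B \<inter> S = {}" using B(1) by blast
    ultimately have "card A = card B + card S" using B fS by (simp add: card_Un_disjoint)
    thus "A \<in> {A. A \<subseteq> U \<and> card A = m \<and> S \<subseteq> A}" using B SU True by auto
  qed
  have "inj_on (\<lambda>B. B \<union> S) {B. B \<subseteq> U - S \<and> card B = m - card S}"
    by (rule inj_onI) blast
  then have "card {A. A \<subseteq> U \<and> card A = m \<and> S \<subseteq> A}
      = card {B. B \<subseteq> U - S \<and> card B = m - card S}"
    unfolding eq by (rule card_image)
  also have "\<dots> = card (U - S) choose (m - card S)" using U by (simp add: n_subsets)
  also have "card (U - S) = card U - card S" using SU fS by (simp add: card_Diff_subset)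
  finally show ?thesis using True by simp
next
  case False
  have "card S \<le> card A" if "A \<subseteq> U" "S \<subseteq> A" for A
    using that U by (meson card_mono finite_subset)
  then have empty: "{A. A \<subseteq> U \<and> card A = m \<and> S \<subseteq> A} = {}" using False by fastforce
  show ?thesis unfolding empty using False by simp
qed

definition inclusion_prob :: "nat \<Rightarrow> nat \<Rightarrow> nat \<Rightarrow> real" where
  "inclusion_prob N m t = real (m choose t) / real (N choose t)"

lemma prob_uniform_subset_contains:
  assumes U: "finite U" and SU: "S \<subseteq> U" and m: "m \<le> card U"
  shows "measure_pmf.prob (pmf_of_set {A. A \<subseteq> U \<and> card A = m}) {A. S \<subseteq> A}
         = inclusion_prob (card U) m (card S)"
proof -
  let ?subsets = "{A. A \<subseteq> U \<and> card A = m}"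
  have t: "card S \<le> card U" using U SU by (rule card_mono)
  have card_subsets: "card ?subsets = card U choose m" using U by (rule n_subsets)
  then have "card ?subsets \<noteq> 0" using m by (simp add: binomial_eq_0_iff)
  then have "?subsets \<noteq> {}" by (metis card.empty)
  then have "measure_pmf.prob (pmf_of_set ?subsets) {A. S \<subseteq> A}
      = card {A. A \<subseteq> U \<and> card A = m \<and> S \<subseteq> A} / (card U choose m)"
    using U card_subsets by (simp add: measure_pmf_of_set Int_def conj_assoc)
  also have "\<dots> = inclusion_prob (card U) m (card S)"
  proof (cases "card S \<le> m")
    case True
    have "real (card U choose m) * real (m choose card S)
        = real (card U choose card S) * real ((card U - card S) choose (m - card S))"
      using choose_mult[OF True m] by (metis of_nat_mult)
    moreover have "card U choose m \<noteq> 0" "card U choose card S \<noteq> 0"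
      using m t by (simp_all add: binomial_eq_0_iff)
    ultimately show ?thesis
      using True U SU by (simp add: card_subsets_containing inclusion_prob_def field_simps)
  next
    case False
    then show ?thesis using U SU by (simp add: card_subsets_containing inclusion_prob_def)
  qed
  finally show ?thesis .
qed

lemma inclusion_prob_one: "inclusion_prob N m 1 = real m / real N"
  by (simp add: inclusion_prob_def)

lemma inclusion_prob_nonneg: "0 \<le> inclusion_prob N m t"
  by (simp add: inclusion_prob_def)

lemma inclusion_prob_pos:
  assumes "t \<le> m" and "m \<le> N"
  shows "0 < inclusion_prob N m t"
  using assms by (simp add: inclusion_prob_def binomial_eq_0_iff)

text \<open>No side condition is needed: for \<open>t \<ge> m\<close> or \<open>t \<ge> N\<close> both sides vanish, by truncated
  subtraction and \<open>x / 0 = 0\<close>.\<close>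
lemma inclusion_prob_Suc:
  "inclusion_prob N m (Suc t) = inclusion_prob N m t * (real (m - t) / real (N - t))"
proof -
  have choose_Suc: "real (n choose Suc t) = real (n choose t) * real (n - t) / real (Suc t)" for n
  proof -
    have "(n choose Suc t) * Suc t = (n choose t) * (n - t)"
      by (metis binomial_absorb_comp binomial_absorption mult.commute)
    then show ?thesis by (simp add: field_simps flip: of_nat_mult)
  qed
  show ?thesis by (simp add: inclusion_prob_def choose_Suc)
qed

lemma diff_ratio_Suc_le:
  assumes "m \<le> N"
  shows "real (m - Suc t) / real (N - Suc t) \<le> real (m - t) / real (N - t)"
proof (cases "Suc t < m")
  case True
  then have "real (m - Suc t) * real (N - t) \<le> real (m - t) * real (N - Suc t)"
    using assms by (simp add: of_nat_diff algebra_simps)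
  then show ?thesis using True assms by (simp add: frac_le_eq divide_le_0_iff)
next
  case False
  then show ?thesis by simp
qed

lemma inclusion_prob_Suc_le:
  assumes "m \<le> N"
  shows "inclusion_prob N m (Suc t) \<le> inclusion_prob N m t"
proof -
  have "real (m - t) / real (N - t) \<le> 1"
    using assms by (cases "N - t = 0") (simp_all add: divide_le_eq_1)
  then show ?thesis
    unfolding inclusion_prob_Suc using inclusion_prob_nonneg by (rule mult_left_le)
qed

lemma inclusion_prob_log_concave:
  assumes "m \<le> N"
  shows "inclusion_prob N m (Suc (Suc t)) * inclusion_prob N m t \<le> (inclusion_prob N m (Suc t))\<^sup>2"
proof -
  let ?h = "inclusion_prob N m"
  have "?h (Suc (Suc t)) * ?h t = ?h (Suc t) * ?h t * (real (m - Suc t) / real (N - Suc t))"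
    by (simp only: inclusion_prob_Suc[of N m "Suc t"] ac_simps)
  also have "\<dots> \<le> ?h (Suc t) * ?h t * (real (m - t) / real (N - t))"
    using diff_ratio_Suc_le[OF assms] by (intro mult_left_mono) (simp_all add: inclusion_prob_nonneg)
  also have "\<dots> = (?h (Suc t))\<^sup>2"
    by (simp add: inclusion_prob_Suc[of N m t] power2_eq_square)
  finally show ?thesis .
qed

lemma set_pmf_first_index_pmf:
  assumes "\<exists>l\<in>{1..d}. w l \<noteq> 0"
  shows "set_pmf (first_index_pmf d w) \<subseteq> {1..d}"
proof -
  let ?W = "\<Sum>j\<in>{1..d}. \<bar>w j\<bar>"
  let ?f = "\<lambda>i. if i \<in> {1..d} then \<bar>w i\<bar> / ?W else 0"
  obtain l where l: "l \<in> {1..d}" "w l \<noteq> 0" using assms by blast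
  have "\<bar>w l\<bar> \<le> ?W" using l by (intro member_le_sum) auto
  then have W_pos: "?W > 0" using l by simp
  then have nonneg: "\<And>i. 0 \<le> ?f i" by simp
  have "(\<integral>\<^sup>+ x. ennreal (?f x) \<partial>count_space UNIV) = (\<Sum>x\<in>{1..d}. ennreal (?f x))"
    by (rule nn_integral_count_space') auto
  also have "\<dots> = ennreal (\<Sum>x\<in>{1..d}. \<bar>w x\<bar> / ?W)"
    using nonneg by (simp add: sum_ennreal)
  also have "(\<Sum>x\<in>{1..d}. \<bar>w x\<bar> / ?W) = 1"
    using W_pos by (simp add: sum_divide_distrib[symmetric])
  finally have total: "(\<integral>\<^sup>+ x. ennreal (?f x) \<partial>count_space UNIV) = 1" by simp
  show ?thesis
    unfolding first_index_pmf_def set_embed_pmf[OF nonneg total] by auto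
qed

lemma measure_bind_pmf:
  "measure_pmf.prob (bind_pmf p f) A = (\<integral>x. measure_pmf.prob (f x) A \<partial>measure_pmf p)"
  unfolding measure_pmf_bind
  by (rule measure_pmf.measure_bind[where N="count_space UNIV"])
     (auto simp: space_subprob_algebra measure_pmf.subprob_space_axioms)

lemma integral_measure_pmf_if:
  fixes \<alpha> \<beta> :: real
  shows "(\<integral>x. (if x \<in> A then \<alpha> else \<beta>) \<partial>measure_pmf p)
         = \<alpha> * measure_pmf.prob p A + \<beta> * (1 - measure_pmf.prob p A)"
proof -
  have if_eq: "(\<lambda>x. if x \<in> A then \<alpha> else \<beta>) = (\<lambda>x. \<beta> + (\<alpha> - \<beta>) * indicator A x)"
    by (auto simp: indicator_def)
  have "(\<integral>x. (if x \<in> A then \<alpha> else \<beta>) \<partial>measure_pmf p) = \<beta> + (\<alpha> - \<beta>) * measure_pmf.prob p A"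
    unfolding if_eq
    by (subst Bochner_Integration.integral_add)
       (auto simp: measure_pmf.prob_space measure_pmf.emeasure_eq_measure
             intro!: integrable_real_indicator)
  then show ?thesis by (simp add: algebra_simps)
qed

lemma prob_insert_uniform_subset_contains:
  assumes U: "finite U" and "x \<notin> U" and S: "S \<subseteq> insert x U" and m: "m \<le> card U"
  shows "measure_pmf.prob (map_pmf (insert x) (pmf_of_set {A. A \<subseteq> U \<and> card A = m}))
           {B. S \<subseteq> B}
         = inclusion_prob (card U) m (card (S - {x}))"
proof -
  have "measure_pmf.prob (pmf_of_set {A. A \<subseteq> U \<and> card A = m}) (insert x -` {B. S \<subseteq> B})
      = measure_pmf.prob (pmf_of_set {A. A \<subseteq> U \<and> card A = m}) {A. S - {x} \<subseteq> A}"
    by (intro arg_cong[where f = "measure_pmf.prob _"]) auto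
  also have "\<dots> = inclusion_prob (card U) m (card (S - {x}))"
    using S by (intro prob_uniform_subset_contains U m) auto
  finally show ?thesis by simp
qed

lemma prob_sampling_pmf_superset:
  assumes nz: "\<exists>l\<in>{1..d}. w l \<noteq> 0" and S: "S \<subseteq> {1..d}" and kd: "k \<le> d"
  defines "Q \<equiv> measure_pmf.prob (first_index_pmf d w) S"
  shows "measure_pmf.prob (sampling_pmf k d w) {B. S \<subseteq> B}
         = inclusion_prob (d - 1) (k - 1) (card S - 1) * Q
           + inclusion_prob (d - 1) (k - 1) (card S) * (1 - Q)"
proof -
  let ?h = "inclusion_prob (d - 1) (k - 1)"
  have "AE x in measure_pmf (first_index_pmf d w).
      measure_pmf.prob (map_pmf (insert x) (pmf_of_set {A. A \<subseteq> {1..d} - {x} \<and> card A = k - 1}))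
        {B. S \<subseteq> B}
      = (if x \<in> S then ?h (card S - 1) else ?h (card S))"
  proof (rule AE_pmfI)
    fix x assume "x \<in> set_pmf (first_index_pmf d w)"
    then have x: "x \<in> {1..d}" using set_pmf_first_index_pmf[OF nz] by blast
    have "finite S" using S finite_subset by blast
    moreover have "card ({1..d} - {x}) = d - 1" using x by simp
    ultimately show "measure_pmf.prob (map_pmf (insert x)
          (pmf_of_set {A. A \<subseteq> {1..d} - {x} \<and> card A = k - 1})) {B. S \<subseteq> B}
        = (if x \<in> S then ?h (card S - 1) else ?h (card S))"
      using x S kd by (subst prob_insert_uniform_subset_contains) auto
  qed
  then have "(\<integral>x. measure_pmf.prob (map_pmf (insert x)
        (pmf_of_set {A. A \<subseteq> {1..d} - {x} \<and> card A = k - 1})) {B. S \<subseteq> B}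
      \<partial>measure_pmf (first_index_pmf d w))
    = (\<integral>x. (if x \<in> S then ?h (card S - 1) else ?h (card S)) \<partial>measure_pmf (first_index_pmf d w))"
    by (intro integral_cong_AE) simp_all
  then show ?thesis
    unfolding sampling_pmf_def measure_bind_pmf Q_def integral_measure_pmf_if .
qed

text \<open>Multiplied by \<open>a\<close>, the numerator is at most \<open>b\<^sup>2 + s b (a - b)\<close> by log-concavity, and
  the denominator is at least that since \<open>s \<le> x + y\<close>.\<close>
lemma mixture_ratio_le:
  fixes a b c s x y :: real
  assumes b: "0 < b" "b \<le> a" and c: "c * a \<le> b * b"
    and xy: "0 \<le> x" "0 \<le> y" and s: "s \<le> x + y" "s \<le> 1"
  shows "(b * s + c * (1 - s)) / ((a * x + b * (1 - x)) * (a * y + b * (1 - y))) \<le> 1 / a"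
proof -
  define D where "D = (a * x + b * (1 - x)) * (a * y + b * (1 - y))"
  have "a * x + b * (1 - x) = b + x * (a - b)" "a * y + b * (1 - y) = b + y * (a - b)"
    by (simp_all add: algebra_simps)
  moreover have "b \<le> b + x * (a - b)" "b \<le> b + y * (a - b)" using b xy by simp_all
  ultimately have D_pos: "0 < D" unfolding D_def using b
    by (metis less_le_trans mult_pos_pos)
  have D_eq: "D = b * b + (x + y) * (b * (a - b)) + x * y * ((a - b) * (a - b))"
    unfolding D_def by (simp add: algebra_simps)
  have "s * (b * (a - b)) \<le> (x + y) * (b * (a - b))"
    using s b by (intro mult_right_mono) auto
  moreover have "0 \<le> x * y * ((a - b) * (a - b))" using xy by simp
  ultimately have D_ge: "b * b + s * (b * (a - b)) \<le> D" unfolding D_eq by linarith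
  have "a * (b * s + c * (1 - s)) = s * (a * b) + (1 - s) * (c * a)" by (simp add: algebra_simps)
  also have "\<dots> \<le> s * (a * b) + (1 - s) * (b * b)"
    using c s by (intro add_left_mono mult_left_mono) auto
  also have "\<dots> = b * b + s * (b * (a - b))" by (simp add: algebra_simps)
  finally have "a * (b * s + c * (1 - s)) \<le> D" using D_ge by linarith
  then have "b * s + c * (1 - s) \<le> D / a" using b by (simp add: pos_le_divide_eq mult.commute)
  then have "(b * s + c * (1 - s)) / D \<le> D / a / D"
    using D_pos by (intro divide_right_mono) simp_all
  also have "D / a / D = 1 / a" using D_pos by simp
  finally show ?thesis unfolding D_def .
qed

theorem lemma11:
  fixes k d i j r :: nat and w :: "nat \<Rightarrow> real"
  assumes "3 \<le> k" and "k + 3 \<le> d"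
    and "\<exists>l\<in>{1..d}. w l \<noteq> 0"
    and "i \<in> {1..d}" and "j \<in> {1..d}" and "r \<in> {1..d}"
    and "i \<noteq> j" and "i \<noteq> r" and "j \<noteq> r"
  shows "measure_pmf.prob (sampling_pmf k d w) {B. {i, j, r} \<subseteq> B}
         / (measure_pmf.prob (sampling_pmf k d w) {B. {i, j} \<subseteq> B}
            * measure_pmf.prob (sampling_pmf k d w) {B. {i, r} \<subseteq> B})
         \<le> (real d - 1) / (real k - 1)"
proof -
  let ?P = "measure_pmf.prob (sampling_pmf k d w)"
  let ?Q = "measure_pmf.prob (first_index_pmf d w)"
  let ?h = "inclusion_prob (d - 1) (k - 1)"
  have kd: "k \<le> d" and k2: "2 \<le> k - 1" and kd1: "k - 1 \<le> d - 1" using assms by auto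
  have "?P {B. {i, j, r} \<subseteq> B} = ?h 2 * ?Q {i, j, r} + ?h 3 * (1 - ?Q {i, j, r})"
    using prob_sampling_pmf_superset[OF assms(3) _ kd, of "{i, j, r}"] assms
    by (simp add: eval_nat_numeral)
  moreover have "?P {B. {i, j} \<subseteq> B} = ?h 1 * ?Q {i, j} + ?h 2 * (1 - ?Q {i, j})"
    using prob_sampling_pmf_superset[OF assms(3) _ kd, of "{i, j}"] assms
    by (simp add: eval_nat_numeral)
  moreover have "?P {B. {i, r} \<subseteq> B} = ?h 1 * ?Q {i, r} + ?h 2 * (1 - ?Q {i, r})"
    using prob_sampling_pmf_superset[OF assms(3) _ kd, of "{i, r}"] assms
    by (simp add: eval_nat_numeral)
  moreover have "?Q {i, j, r} \<le> ?Q {i, j} + ?Q {i, r}"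
    using measure_subadditive[of "{i, j}" "measure_pmf (first_index_pmf d w)" "{i, r}"]
    by (simp add: measure_pmf.emeasure_eq_measure insert_commute)
  moreover have "?h 3 * ?h 1 \<le> ?h 2 * ?h 2"
    using inclusion_prob_log_concave[OF kd1, of 1] by (simp add: numeral_eq_Suc power2_eq_square)
  ultimately have "?P {B. {i, j, r} \<subseteq> B} / (?P {B. {i, j} \<subseteq> B} * ?P {B. {i, r} \<subseteq> B})
      \<le> 1 / ?h 1"
    using inclusion_prob_pos[OF k2 kd1] inclusion_prob_Suc_le[OF kd1, of 1]
    by (simp only: numeral_2_eq_2) (intro mixture_ratio_le; simp)
  also have "1 / ?h 1 = (real d - 1) / (real k - 1)"
    unfolding inclusion_prob_one using assms by (simp add: of_nat_diff)
  finally show ?thesis .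
qed

end
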